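(* Consider the fixed-share algorithm with time-varying parameters, with $\eta_t\le\eta_{t-1}$ for all $t\ge1$. Then for all $t\ge1$, all loss sequences in $[0,1]^d$, and all $q_t\in\Delta_d$, \[ (\hat p_t-q_t)^\top\ell_t\le\sum_{i=1}^dq_{i,t}\Big(\frac1{\eta_{t-1}}\ln\frac1{\hat p_{i,t}}-\frac1{\eta_t}\ln\frac1{v_{i,t+1}}\Big)+\Big(\frac1{\eta_t}-\frac1{\eta_{t-1}}\Big)\ln d+\frac{\eta_{t-1}}8. \]
   Context: Let $d\ge1$ and $\Delta_d=\{q\in[0,1]^d:\sum_{i=1}^d q_i=1\}$. The fixed-share algorithm with time-varying parameters uses sequences $(\eta_t)_{t\ge1}$ of positive numbers and $(\alpha_t)_{t\ge1}$ in $(0,1]$, with the convention $\eta_0=\eta_1$. It sets $\hat p_1=(1/d,\dots,1/d)$; at each round $t\ge1$ it predicts $\hat p_t\in\Delta_d$, observes an arbitrary loss vector $\ell_t=(\ell_{1,t},\dots,\ell_{d,t})\in[0,1]^d$, suffers loss $\hat p_t^\top\ell_t$, and then sets, for $j=1,\dots,d$, $v_{j,t+1}=\hat p_{j,t}^{\,\eta_t/\eta_{t-1}}e^{-\eta_t\ell_{j,t}}\big/\sum_{i=1}^d\hat p_{i,t}^{\,\eta_t/\eta_{t-1}}e^{-\eta_t\ell_{i,t}}$ and $\hat p_{j,t+1}=\alpha_t/d+(1-\alpha_t)v_{j,t+1}$. *)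

theory Defs
  imports Complex_Main
begin

text \<open>Experts are indexed by 0..<d; vectors are functions nat => real.
  Rounds are indexed by t >= 1. The learning-rate sequence eta is used with the
  convention eta_0 = eta_1, implemented by fs_eta.\<close>

definition fs_eta :: "(nat \<Rightarrow> real) \<Rightarrow> nat \<Rightarrow> real" where
  "fs_eta eta t = (if t = 0 then eta 1 else eta t)"

definition fs_update :: "nat \<Rightarrow> real \<Rightarrow> real \<Rightarrow> (nat \<Rightarrow> real) \<Rightarrow> (nat \<Rightarrow> real) \<Rightarrow> nat \<Rightarrow> real" where
  "fs_update d eprev e l p = (\<lambda>j. p j powr (e / eprev) * exp (- e * l j) /
      (\<Sum>i<d. p i powr (e / eprev) * exp (- e * l i)))"

text \<open>fs_phat d eta alpha loss t is the prediction hat p_t (for t >= 1);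
  the value at t = 0 is a dummy.\<close>
primrec fs_phat :: "nat \<Rightarrow> (nat \<Rightarrow> real) \<Rightarrow> (nat \<Rightarrow> real) \<Rightarrow> (nat \<Rightarrow> nat \<Rightarrow> real) \<Rightarrow> nat \<Rightarrow> nat \<Rightarrow> real" where
  "fs_phat d eta alpha loss 0 = (\<lambda>j. 1 / real d)"
| "fs_phat d eta alpha loss (Suc t) =
     (if t = 0 then (\<lambda>j. 1 / real d)
      else (\<lambda>j. alpha t / real d + (1 - alpha t) *
         fs_update d (fs_eta eta (t - 1)) (eta t) (loss t) (fs_phat d eta alpha loss t) j))"

text \<open>fs_v d eta alpha loss (t+1) is v_{t+1} (for t >= 1).\<close>
definition fs_v :: "nat \<Rightarrow> (nat \<Rightarrow> real) \<Rightarrow> (nat \<Rightarrow> real) \<Rightarrow> (nat \<Rightarrow> nat \<Rightarrow> real) \<Rightarrow> nat \<Rightarrow> nat \<Rightarrow> real" where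
  "fs_v d eta alpha loss t =
     fs_update d (fs_eta eta (t - 2)) (eta (t - 1)) (loss (t - 1)) (fs_phat d eta alpha loss (t - 1))"

end

theory Submission
  imports Defs "HOL-Probability.Hoeffding"
begin

text \<open>
  One round of fixed share is an exponential-weights step with the exponent
  r = eta_t / eta_(t-1) <= 1 applied to the prediction, followed by mixing with the
  uniform distribution.  Writing W for the normaliser of the update, one has
  exactly ln (1/v_i) = ln W - r ln p_i + eta_t l_i, so the q-weighted right-hand
  side of the theorem equals -(ln W)/eta_t - q.l, and the theorem reduces to an
  upper bound on ln W.  That bound combines two classical inequalities:
  (1) a power-mean inequality, sum y_i^r <= n^(1-r) (sum y_i)^r for 0 < r <= 1,
      applied to y_i = p_i exp(-eta_(t-1) l_i), which produces the term
      (1/eta_t - 1/eta_(t-1)) ln d;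
  (2) Hoeffding's lemma for a finite distribution, ln sum p_i exp(-s l_i)
      <= -s p.l + s^2/8, which produces p.l and eta_(t-1)/8.
  The analytic facts are proved over arbitrary finite index sets; then the
  one-step bound is proved for a single update of an arbitrary positive
  distribution, and the theorem follows because every prediction of the
  algorithm is a positive probability vector.
\<close>

lemma hoeffding_finite:
  fixes p l :: "'a \<Rightarrow> real" and s :: real
  assumes p_nonneg: "\<forall>i\<in>I. 0 \<le> p i" and p_sum: "(\<Sum>i\<in>I. p i) = 1"
    and l_range: "\<forall>i\<in>I. 0 \<le> l i \<and> l i \<le> 1" and s_nonneg: "0 \<le> s"
  shows "ln (\<Sum>i\<in>I. p i * exp (- s * l i)) \<le> - s * (\<Sum>i\<in>I. p i * l i) + s\<^sup>2 / 8"
proof -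
  define m where "m = (\<Sum>i\<in>I. p i * l i)"
  have m_le_1: "m \<le> 1"
  proof -
    have "m \<le> (\<Sum>i\<in>I. p i)"
      unfolding m_def using p_nonneg l_range by (intro sum_mono) (simp add: mult_left_le)
    then show ?thesis using p_sum by simp
  qed
  text \<open>Convexity of exp bounds each exponential by the chord through 0 and -s.\<close>
  have chord: "exp (- s * l i) \<le> (1 - l i) + l i * exp (- s)" if "i \<in> I" for i
  proof -
    have "exp ((1 - l i) *\<^sub>R 0 + l i *\<^sub>R (- s)) \<le> (1 - l i) * exp 0 + l i * exp (- s)"
      using l_range that by (intro convex_onD[OF exp_convex]) auto
    then show ?thesis by (simp add: mult.commute)
  qed
  have lower: "exp (- s) \<le> (\<Sum>i\<in>I. p i * exp (- s * l i))"
  proof -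
    have "exp (- s) = (\<Sum>i\<in>I. p i * exp (- s))"
      using p_sum by (simp flip: sum_distrib_right)
    also have "\<dots> \<le> (\<Sum>i\<in>I. p i * exp (- s * l i))"
      using p_nonneg l_range s_nonneg by (intro sum_mono mult_left_mono) (auto simp: mult_left_le)
    finally show ?thesis .
  qed
  have "(\<Sum>i\<in>I. p i * exp (- s * l i)) \<le> (\<Sum>i\<in>I. p i * ((1 - l i) + l i * exp (- s)))"
    using p_nonneg chord by (intro sum_mono mult_left_mono) auto
  also have "\<dots> = 1 - m + m * exp (- s)"
    using p_sum by (simp add: m_def algebra_simps sum.distrib sum_subtractf sum_distrib_left)
  also have "\<dots> = exp (- s) * (1 + (1 - m) * (exp s - 1))"
    by (simp add: algebra_simps exp_minus field_simps)
  finally have upper: "(\<Sum>i\<in>I. p i * exp (- s * l i)) \<le> exp (- s) * (1 + (1 - m) * (exp s - 1))" .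
  have factor_pos: "0 < 1 + (1 - m) * (exp s - 1)"
    using m_le_1 s_nonneg by (intro add_pos_nonneg) auto
  have "ln (\<Sum>i\<in>I. p i * exp (- s * l i)) \<le> ln (exp (- s) * (1 + (1 - m) * (exp s - 1)))"
    using upper lower by (intro ln_mono) (auto intro: less_le_trans[OF exp_gt_zero])
  also have "\<dots> = - s + ln (1 + (1 - m) * (exp s - 1))"
    using factor_pos by (simp add: ln_mult)
  also have "\<dots> \<le> - s + (s * (1 - m) + s\<^sup>2 / 8)"
    using Hoeffdings_lemma_aux[of s "1 - m"] s_nonneg m_le_1 by simp
  finally show ?thesis by (simp add: m_def algebra_simps)
qed

text \<open>Proved by Young's inequality against the arithmetic mean.\<close>

lemma sum_powr_le_card_powr:
  fixes y :: "'a \<Rightarrow> real" and r :: real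
  assumes fin: "finite I" and ne: "I \<noteq> {}" and y_pos: "\<forall>i\<in>I. 0 < y i"
    and r_pos: "0 < r" and r_le_1: "r \<le> 1"
  shows "(\<Sum>i\<in>I. y i powr r) \<le> real (card I) powr (1 - r) * (\<Sum>i\<in>I. y i) powr r"
proof -
  define n where "n = real (card I)"
  define S where "S = (\<Sum>i\<in>I. y i)"
  define a where "a = S / n"
  have n_pos: "0 < n" using fin ne by (simp add: n_def card_gt_0_iff)
  have S_pos: "0 < S" unfolding S_def using fin ne y_pos by (intro sum_pos) auto
  have a_pos: "0 < a" using S_pos n_pos by (simp add: a_def)
  have "(\<Sum>i\<in>I. y i powr r) * a powr (1 - r) = (\<Sum>i\<in>I. y i powr r * a powr (1 - r))"
    by (simp add: sum_distrib_right)
  also have "\<dots> \<le> (\<Sum>i\<in>I. r * y i + (1 - r) * a)"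
    using Youngs_inequality_0[of r "1 - r" _ a] r_pos r_le_1 a_pos y_pos by (intro sum_mono) auto
  also have "\<dots> = r * S + (1 - r) * a * n"
    by (simp add: sum.distrib sum_distrib_left S_def n_def)
  also have "\<dots> = S"
    using n_pos by (simp add: a_def field_simps)
  finally have young: "(\<Sum>i\<in>I. y i powr r) * a powr (1 - r) \<le> S" .
  have "S = (n powr (1 - r) * S powr r) * a powr (1 - r)"
    using S_pos n_pos by (simp add: a_def powr_divide field_simps flip: powr_add)
  then have "S / a powr (1 - r) = n powr (1 - r) * S powr r"
    using a_pos by (simp add: divide_eq_eq)
  moreover have "(\<Sum>i\<in>I. y i powr r) \<le> S / a powr (1 - r)"
    using young a_pos by (simp add: pos_le_divide_eq)
  ultimately show ?thesis
    by (simp add: S_def n_def)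
qed

definition fs_partition :: "nat \<Rightarrow> real \<Rightarrow> real \<Rightarrow> (nat \<Rightarrow> real) \<Rightarrow> (nat \<Rightarrow> real) \<Rightarrow> real" where
  "fs_partition d e' e l p = (\<Sum>i<d. p i powr (e / e') * exp (- e * l i))"

lemma fs_update_eq: "fs_update d e' e l p j = p j powr (e / e') * exp (- e * l j) / fs_partition d e' e l p"
  by (simp add: fs_update_def fs_partition_def)

lemma fs_partition_pos:
  assumes "d \<ge> 1" and "\<forall>i<d. 0 < p i"
  shows "0 < fs_partition d e' e l p"
  unfolding fs_partition_def using assms by (intro sum_pos) (auto simp: lessThan_empty_iff)

lemma fs_update_distribution:
  assumes d_pos: "d \<ge> 1" and p_pos: "\<forall>i<d. 0 < p i"
  shows "\<forall>i<d. 0 < fs_update d e' e l p i" and "(\<Sum>i<d. fs_update d e' e l p i) = 1"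
  using p_pos fs_partition_pos[OF assms, of e' e l]
  by (auto simp: fs_update_eq fs_partition_def simp flip: sum_divide_distrib)

lemma ln_inverse_fs_update:
  assumes "d \<ge> 1" and "\<forall>i<d. 0 < p i" and "i < d"
  shows "ln (1 / fs_update d e' e l p i)
           = ln (fs_partition d e' e l p) - e / e' * ln (p i) + e * l i"
proof -
  have "0 < p i" using assms by simp
  then show ?thesis
    using fs_partition_pos[OF assms(1,2), of e' e l]
    by (simp add: fs_update_eq ln_div ln_mult ln_powr)
qed

text \<open>Upper bound on the log-normaliser, combining the power-mean inequality
  (to undo the tempering exponent) with Hoeffding's lemma at rate e'.\<close>

lemma ln_fs_partition_bound:
  fixes p l :: "nat \<Rightarrow> real" and e e' :: real
  assumes d_pos: "d \<ge> 1" and p_pos: "\<forall>i<d. 0 < p i" and p_sum: "(\<Sum>i<d. p i) = 1"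
    and l_range: "\<forall>i<d. 0 \<le> l i \<and> l i \<le> 1" and e_pos: "0 < e" and e_le: "e \<le> e'"
  shows "ln (fs_partition d e' e l p) / e
           \<le> - (\<Sum>i<d. p i * l i) + (1 / e - 1 / e') * ln (real d) + e' / 8"
proof -
  define r where "r = e / e'"
  have e'_pos: "0 < e'" using e_pos e_le by simp
  have r_pos: "0 < r" and r_le_1: "r \<le> 1" using e_pos e'_pos e_le by (auto simp: r_def)
  define y where "y i = p i * exp (- e' * l i)" for i
  define S where "S = (\<Sum>i<d. y i)"
  have y_pos: "\<forall>i<d. 0 < y i" using p_pos by (simp add: y_def)
  have S_pos: "0 < S" unfolding S_def using y_pos d_pos by (intro sum_pos) (auto simp: lessThan_empty_iff)
  have tempered: "y i powr r = p i powr r * exp (- e * l i)" if "i < d" for i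
  proof -
    have "y i powr r = p i powr r * exp (- e' * l i) powr r"
      unfolding y_def using p_pos that by (simp add: powr_mult)
    also have "exp (- e' * l i) powr r = exp (- e * l i)"
      using e'_pos by (simp add: powr_def r_def)
    finally show ?thesis .
  qed
  have "fs_partition d e' e l p \<le> real d powr (1 - r) * S powr r"
    using sum_powr_le_card_powr[of "{..<d}" y r] d_pos y_pos r_pos r_le_1 tempered
    by (simp add: fs_partition_def S_def r_def lessThan_empty_iff)
  then have "ln (fs_partition d e' e l p) \<le> ln (real d powr (1 - r) * S powr r)"
    using fs_partition_pos[OF d_pos p_pos] by (intro ln_mono) auto
  also have "\<dots> = (1 - r) * ln (real d) + r * ln S"
    using S_pos d_pos by (simp add: ln_mult ln_powr)
  also have "\<dots> \<le> (1 - r) * ln (real d) + r * (- e' * (\<Sum>i<d. p i * l i) + e'\<^sup>2 / 8)"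
    using hoeffding_finite[of "{..<d}" p l e'] p_pos p_sum l_range e'_pos r_pos
    by (simp add: S_def y_def less_imp_le)
  finally have "ln (fs_partition d e' e l p) / e
      \<le> ((1 - r) * ln (real d) + r * (- e' * (\<Sum>i<d. p i * l i) + e'\<^sup>2 / 8)) / e"
    using e_pos by (intro divide_right_mono) auto
  also have "\<dots> = - (\<Sum>i<d. p i * l i) + (1 / e - 1 / e') * ln (real d) + e' / 8"
    using e_pos e'_pos by (simp add: r_def field_simps power2_eq_square)
  finally show ?thesis .
qed

lemma fs_update_regret_bound:
  fixes p l q :: "nat \<Rightarrow> real" and e e' :: real
  assumes d_pos: "d \<ge> 1" and p_pos: "\<forall>i<d. 0 < p i" and p_sum: "(\<Sum>i<d. p i) = 1"
    and l_range: "\<forall>i<d. 0 \<le> l i \<and> l i \<le> 1"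
    and q_sum: "(\<Sum>i<d. q i) = 1"
    and e_pos: "0 < e" and e_le: "e \<le> e'"
  shows "(\<Sum>i<d. (p i - q i) * l i)
    \<le> (\<Sum>i<d. q i * (1 / e' * ln (1 / p i) - 1 / e * ln (1 / fs_update d e' e l p i)))
      + (1 / e - 1 / e') * ln (real d) + e' / 8"
proof -
  define W where "W = fs_partition d e' e l p"
  have "(\<Sum>i<d. q i * (1 / e' * ln (1 / p i) - 1 / e * ln (1 / fs_update d e' e l p i)))
      = (\<Sum>i<d. - q i * (ln W / e) - q i * l i)"
  proof (intro sum.cong refl)
    fix i assume "i \<in> {..<d}"
    then have i: "i < d" by simp
    have "ln (1 / p i) = - ln (p i)" using p_pos i by (simp add: ln_div)
    then show "q i * (1 / e' * ln (1 / p i) - 1 / e * ln (1 / fs_update d e' e l p i))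
        = - q i * (ln W / e) - q i * l i"
      unfolding ln_inverse_fs_update[OF d_pos p_pos i] W_def using e_pos e_le
      by (simp add: field_simps)
  qed
  also have "\<dots> = - (ln W / e) - (\<Sum>i<d. q i * l i)"
    using q_sum by (simp add: sum_subtractf sum_negf flip: sum_distrib_right times_divide_eq_right)
  finally have rhs: "(\<Sum>i<d. q i * (1 / e' * ln (1 / p i) - 1 / e * ln (1 / fs_update d e' e l p i)))
      = - (ln W / e) - (\<Sum>i<d. q i * l i)" .
  have lhs: "(\<Sum>i<d. (p i - q i) * l i) = (\<Sum>i<d. p i * l i) - (\<Sum>i<d. q i * l i)"
    by (simp add: left_diff_distrib sum_subtractf)
  show ?thesis
    using rhs lhs ln_fs_partition_bound[OF d_pos p_pos p_sum l_range e_pos e_le]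
    unfolding W_def by linarith
qed

lemma fs_phat_distribution:
  assumes d_pos: "d \<ge> 1" and alpha_range: "\<forall>s\<ge>1. 0 < alpha s \<and> alpha s \<le> 1"
  shows "(\<forall>i<d. 0 < fs_phat d eta alpha loss t i) \<and> (\<Sum>i<d. fs_phat d eta alpha loss t i) = 1"
proof (induction t)
  case 0
  then show ?case using d_pos by simp
next
  case (Suc t)
  show ?case
  proof (cases "t = 0")
    case True
    then show ?thesis using d_pos by simp
  next
    case False
    define u where "u = fs_update d (fs_eta eta (t - 1)) (eta t) (loss t) (fs_phat d eta alpha loss t)"
    have u_pos: "\<forall>i<d. 0 < u i" and u_sum: "(\<Sum>i<d. u i) = 1"
      using fs_update_distribution[OF d_pos] Suc.IH unfolding u_def by auto
    have "0 < alpha t" "alpha t \<le> 1" using alpha_range False by auto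
    moreover have "fs_phat d eta alpha loss (Suc t) = (\<lambda>j. alpha t / real d + (1 - alpha t) * u j)"
      using False by (simp add: u_def)
    ultimately show ?thesis
      using u_pos u_sum d_pos by (auto intro!: add_pos_nonneg simp: sum.distrib simp flip: sum_distrib_left)
  qed
qed

theorem mainTheorem12:
  fixes d :: nat and eta alpha :: "nat \<Rightarrow> real" and loss :: "nat \<Rightarrow> nat \<Rightarrow> real"
    and q :: "nat \<Rightarrow> real" and t :: nat
  assumes d_pos: "d \<ge> 1"
    and eta_pos: "\<forall>s\<ge>1. eta s > 0"
    and alpha_range: "\<forall>s\<ge>1. 0 < alpha s \<and> alpha s \<le> 1"
    and eta_mono: "\<forall>s\<ge>1. eta s \<le> fs_eta eta (s - 1)"
    and loss_range: "\<forall>s\<ge>1. \<forall>i<d. 0 \<le> loss s i \<and> loss s i \<le> 1"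
    and q_nonneg: "\<forall>i<d. 0 \<le> q i"
    and q_sum: "(\<Sum>i<d. q i) = 1"
    and t_pos: "t \<ge> 1"
  shows "(\<Sum>i<d. (fs_phat d eta alpha loss t i - q i) * loss t i)
    \<le> (\<Sum>i<d. q i * (1 / fs_eta eta (t - 1) * ln (1 / fs_phat d eta alpha loss t i)
                    - 1 / eta t * ln (1 / fs_v d eta alpha loss (t + 1) i)))
      + (1 / eta t - 1 / fs_eta eta (t - 1)) * ln (real d)
      + fs_eta eta (t - 1) / 8"
proof -
  have phat: "\<forall>i<d. 0 < fs_phat d eta alpha loss t i" "(\<Sum>i<d. fs_phat d eta alpha loss t i) = 1"
    using fs_phat_distribution[OF d_pos alpha_range] by auto
  have v_next: "fs_v d eta alpha loss (t + 1)
      = fs_update d (fs_eta eta (t - 1)) (eta t) (loss t) (fs_phat d eta alpha loss t)"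
    by (simp add: fs_v_def)
  show ?thesis
    unfolding v_next
    using fs_update_regret_bound[OF d_pos phat _ q_sum] loss_range eta_pos eta_mono t_pos
    by simp
qed

end
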